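(* Let $n\ge 1$ and let $\alpha,\beta,\gamma,\alpha_i,\beta_i,\gamma_i\in\widehat{\mathbb{F}_q^\times}$ ($1\le i\le n$). (i) For all $\lambda_1,\dots,\lambda_n\in\mathbb{F}_q$, $$-g(\alpha)\,F_A^{(n)}\!\left({\alpha;\beta_1,\dots,\beta_n\atop \gamma_1,\dots,\gamma_n};\lambda_1,\dots,\lambda_n\right)=\sum_{t\in\mathbb{F}_q^\times}\psi(t)\alpha(t)\prod_{i=1}^n {}_1F_1\!\left({\beta_i\atop\gamma_i};\lambda_i t\right).$$ (ii) For all $\lambda_1,\dots,\lambda_n\in\mathbb{F}_q$, $$-\frac{q}{g^\circ(\gamma)}\,F_B^{(n)}\!\left({\alpha_1,\dots,\alpha_n;\beta_1,\dots,\beta_n\atop \gamma};\lambda_1,\dots,\lambda_n\right)=\sum_{t\in\mathbb{F}_q^\times}\psi(-t)\overline{\gamma}(t)\prod_{i=1}^n {}_2F_0\!\left({\alpha_i,\beta_i\atop -};\frac{\lambda_i}{t}\right).$$ (iii) Suppose $p\neq 2$. For all $\lambda_1,\dots,\lambda_n\in\mathbb{F}_q$, $$-g(\alpha^2)\,F_C^{(n)}\!\left({\alpha;\alpha\phi\atop \beta_1,\dots,\beta_n};\lambda_1,\dots,\lambda_n\right)=\sum_{t\in\mathbb{F}_q^\times}\psi(t)\alpha^2(t)\prod_{i=1}^n {}_0F_1\!\left({-\atop\beta_i};\frac{\lambda_i t^2}{4}\right).$$ (iv) For all $\lambda_1,\dots,\lambda_n\in\mathbb{F}_q$, $$g(\alpha)g(\beta)\,F_C^{(n)}\!\left({\alpha;\beta\atop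 \gamma_1,\dots,\gamma_n};\lambda_1,\dots,\lambda_n\right)=\sum_{s,t\in\mathbb{F}_q^\times}\psi(s+t)\alpha(s)\beta(t)\prod_{i=1}^n {}_0F_1\!\left({-\atop\gamma_i};\lambda_i st\right).$$
   Context: $\mathbb{F}_q$ is a finite field with $q$ elements and characteristic $p$. $\widehat{\mathbb{F}_q^\times}=\mathrm{Hom}(\mathbb{F}_q^\times,\overline{\mathbb{Q}}^\times)$ is the group of multiplicative characters; $\varepsilon$ is the trivial character and $\phi$ the quadratic character (used only when $p\ne2$). Every character $\eta$ (including $\varepsilon$) is extended by $\eta(0)=0$; $\overline{\eta}=\eta^{-1}$; $\delta(\eta)=1$ if $\eta=\varepsilon$ and $0$ otherwise. A non-trivial additive character $\psi$ of $\mathbb{F}_q$ is fixed. Gauss sums: $g(\eta)=-\sum_{x\in\mathbb{F}_q^\times}\psi(x)\eta(x)$ and $g^\circ(\eta)=q^{\delta(\eta)}g(\eta)$. Pochhammer analogues: $(\alpha)_\nu=g(\alpha\nu)/g(\alpha)$, $(\alpha)^\circ_\nu=g^\circ(\alpha\nu)/g^\circ(\alpha)$. For characters $\alpha_1,\dots,\alpha_m,\beta_1,\dots,\beta_n$ and $\lambda\in\mathbb{F}_q$, $${}_mF_n\!\left({\alpha_1,\dots,\alpha_m\atop\beta_1,\dots,\beta_n};\lambda\right)=\frac{1}{1-q}\sum_{\nu\in\widehat{\mathbb{F}_q^\times}}\frac{(\alpha_1)_\nu\cdots(\alpha_m)_\nu}{(\varepsilon)^\circ_\nu(\beta_1)^\circ_\nu\cdots(\beta_n)^\circ_\nu}\nu(\lambda)$$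 (an empty list of parameters is written $-$). Lauricella functions over $\mathbb{F}_q$: for $\lambda_i\in\mathbb{F}_q$, with all sums over $\nu_1,\dots,\nu_n\in\widehat{\mathbb{F}_q^\times}$ and $P=\prod_{i}\frac{\nu_i(\lambda_i)}{(\varepsilon)^\circ_{\nu_i}}$, $F_A^{(n)}\!\left({\alpha;\beta_1,\dots,\beta_n\atop\gamma_1,\dots,\gamma_n};\lambda\right)=\frac{1}{(1-q)^n}\sum\frac{(\alpha)_{\nu_1\cdots\nu_n}\prod_i(\beta_i)_{\nu_i}}{\prod_i(\gamma_i)^\circ_{\nu_i}}P$, $F_B^{(n)}\!\left({\alpha_1,\dots,\alpha_n;\beta_1,\dots,\beta_n\atop\gamma};\lambda\right)=\frac{1}{(1-q)^n}\sum\frac{\prod_i(\alpha_i)_{\nu_i}(\beta_i)_{\nu_i}}{(\gamma)^\circ_{\nu_1\cdots\nu_n}}P$, $F_C^{(n)}\!\left({\alpha;\beta\atop\gamma_1,\dots,\gamma_n};\lambda\right)=\frac{1}{(1-q)^n}\sum\frac{(\alpha)_{\nu_1\cdots\nu_n}(\beta)_{\nu_1\cdots\nu_n}}{\prod_i(\gamma_i)^\circ_{\nu_i}}P$. *)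

theory Defs
  imports Complex_Main "HOL-Library.FuncSet"
begin

text \<open>Finite field: a type of class field and finite. q = CARD('a).
Multiplicative characters are extended by 0 at 0; values taken in the complex
numbers (which contain the algebraic numbers).\<close>

definition mult_char :: "('a::{field,finite} \<Rightarrow> complex) \<Rightarrow> bool" where
  "mult_char \<chi> \<longleftrightarrow> \<chi> 0 = 0 \<and> \<chi> 1 = 1 \<and> (\<forall>x. x \<noteq> 0 \<longrightarrow> \<chi> x \<noteq> 0) \<and>
     (\<forall>x y. x \<noteq> 0 \<longrightarrow> y \<noteq> 0 \<longrightarrow> \<chi> (x * y) = \<chi> x * \<chi> y)"

definition mchars :: "('a::{field,finite} \<Rightarrow> complex) set" where
  "mchars = {\<chi>. mult_char \<chi>}"

definition nontriv_add_char :: "('a::{field,finite} \<Rightarrow> complex) \<Rightarrow> bool" where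
  "nontriv_add_char \<psi> \<longleftrightarrow> (\<forall>x. \<psi> x \<noteq> 0) \<and> (\<forall>x y. \<psi> (x + y) = \<psi> x * \<psi> y) \<and> (\<exists>x. \<psi> x \<noteq> 1)"

definition triv_char :: "'a::{field,finite} \<Rightarrow> complex" ("\<epsilon>") where
  "triv_char x = (if x = 0 then 0 else 1)"

definition cmul :: "('a \<Rightarrow> complex) \<Rightarrow> ('a \<Rightarrow> complex) \<Rightarrow> 'a \<Rightarrow> complex" where
  "cmul \<alpha> \<beta> = (\<lambda>x. \<alpha> x * \<beta> x)"

definition cconj :: "('a \<Rightarrow> complex) \<Rightarrow> 'a \<Rightarrow> complex" where
  "cconj \<alpha> = (\<lambda>x. inverse (\<alpha> x))"

definition cprod :: "nat \<Rightarrow> (nat \<Rightarrow> 'a \<Rightarrow> complex) \<Rightarrow> 'a \<Rightarrow> complex" where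
  "cprod n \<nu> = (\<lambda>x. \<Prod>i\<in>{1..n}. \<nu> i x)"

text \<open>Quadratic character (meaningful when the characteristic is not 2).\<close>
definition quad_char :: "'a::{field,finite} \<Rightarrow> complex" where
  "quad_char x = (if x = 0 then 0 else if (\<exists>y. y ^ 2 = x) then 1 else -1)"

definition kdelta :: "('a::{field,finite} \<Rightarrow> complex) \<Rightarrow> nat" where
  "kdelta \<eta> = (if \<eta> = \<epsilon> then 1 else 0)"

definition gauss :: "('a::{field,finite} \<Rightarrow> complex) \<Rightarrow> ('a \<Rightarrow> complex) \<Rightarrow> complex" where
  "gauss \<psi> \<eta> = - (\<Sum>x\<in>UNIV - {0}. \<psi> x * \<eta> x)"

definition gauss0 :: "('a::{field,finite} \<Rightarrow> complex) \<Rightarrow> ('a \<Rightarrow> complex) \<Rightarrow> complex" where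
  "gauss0 \<psi> \<eta> = of_nat (card (UNIV :: 'a set)) ^ kdelta \<eta> * gauss \<psi> \<eta>"

definition poch :: "('a::{field,finite} \<Rightarrow> complex) \<Rightarrow> ('a \<Rightarrow> complex) \<Rightarrow> ('a \<Rightarrow> complex) \<Rightarrow> complex" where
  "poch \<psi> \<alpha> \<nu> = gauss \<psi> (cmul \<alpha> \<nu>) / gauss \<psi> \<alpha>"

definition poch0 :: "('a::{field,finite} \<Rightarrow> complex) \<Rightarrow> ('a \<Rightarrow> complex) \<Rightarrow> ('a \<Rightarrow> complex) \<Rightarrow> complex" where
  "poch0 \<psi> \<alpha> \<nu> = gauss0 \<psi> (cmul \<alpha> \<nu>) / gauss0 \<psi> \<alpha>"

text \<open>Generalized hypergeometric function mFn; parameter lists as lists (empty list = "-").\<close>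
definition hyp :: "('a::{field,finite} \<Rightarrow> complex) \<Rightarrow> ('a \<Rightarrow> complex) list \<Rightarrow> ('a \<Rightarrow> complex) list \<Rightarrow> 'a \<Rightarrow> complex" where
  "hyp \<psi> as bs lam = 1 / (1 - of_nat (card (UNIV :: 'a set))) *
     (\<Sum>\<nu>\<in>mchars. (\<Prod>a\<leftarrow>as. poch \<psi> a \<nu>) /
        (poch0 \<psi> \<epsilon> \<nu> * (\<Prod>b\<leftarrow>bs. poch0 \<psi> b \<nu>)) * \<nu> lam)"

definition lauP :: "('a::{field,finite} \<Rightarrow> complex) \<Rightarrow> nat \<Rightarrow> (nat \<Rightarrow> 'a \<Rightarrow> complex) \<Rightarrow> (nat \<Rightarrow> 'a) \<Rightarrow> complex" where
  "lauP \<psi> n \<nu> lam = (\<Prod>i\<in>{1..n}. \<nu> i (lam i) / poch0 \<psi> \<epsilon> (\<nu> i))"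

definition lauricella_A :: "('a::{field,finite} \<Rightarrow> complex) \<Rightarrow> nat \<Rightarrow> ('a \<Rightarrow> complex) \<Rightarrow>
    (nat \<Rightarrow> 'a \<Rightarrow> complex) \<Rightarrow> (nat \<Rightarrow> 'a \<Rightarrow> complex) \<Rightarrow> (nat \<Rightarrow> 'a) \<Rightarrow> complex" where
  "lauricella_A \<psi> n \<alpha> \<beta> \<gamma> lam = 1 / (1 - of_nat (card (UNIV :: 'a set))) ^ n *
     (\<Sum>\<nu>\<in>PiE {1..n} (\<lambda>_. mchars).
        poch \<psi> \<alpha> (cprod n \<nu>) * (\<Prod>i\<in>{1..n}. poch \<psi> (\<beta> i) (\<nu> i)) /
        (\<Prod>i\<in>{1..n}. poch0 \<psi> (\<gamma> i) (\<nu> i)) * lauP \<psi> n \<nu> lam)"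

definition lauricella_B :: "('a::{field,finite} \<Rightarrow> complex) \<Rightarrow> nat \<Rightarrow> (nat \<Rightarrow> 'a \<Rightarrow> complex) \<Rightarrow>
    (nat \<Rightarrow> 'a \<Rightarrow> complex) \<Rightarrow> ('a \<Rightarrow> complex) \<Rightarrow> (nat \<Rightarrow> 'a) \<Rightarrow> complex" where
  "lauricella_B \<psi> n \<alpha> \<beta> \<gamma> lam = 1 / (1 - of_nat (card (UNIV :: 'a set))) ^ n *
     (\<Sum>\<nu>\<in>PiE {1..n} (\<lambda>_. mchars).
        (\<Prod>i\<in>{1..n}. poch \<psi> (\<alpha> i) (\<nu> i) * poch \<psi> (\<beta> i) (\<nu> i)) /
        poch0 \<psi> \<gamma> (cprod n \<nu>) * lauP \<psi> n \<nu> lam)"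

definition lauricella_C :: "('a::{field,finite} \<Rightarrow> complex) \<Rightarrow> nat \<Rightarrow> ('a \<Rightarrow> complex) \<Rightarrow>
    ('a \<Rightarrow> complex) \<Rightarrow> (nat \<Rightarrow> 'a \<Rightarrow> complex) \<Rightarrow> (nat \<Rightarrow> 'a) \<Rightarrow> complex" where
  "lauricella_C \<psi> n \<alpha> \<beta> \<gamma> lam = 1 / (1 - of_nat (card (UNIV :: 'a set))) ^ n *
     (\<Sum>\<nu>\<in>PiE {1..n} (\<lambda>_. mchars).
        poch \<psi> \<alpha> (cprod n \<nu>) * poch \<psi> \<beta> (cprod n \<nu>) /
        (\<Prod>i\<in>{1..n}. poch0 \<psi> (\<gamma> i) (\<nu> i)) * lauP \<psi> n \<nu> lam)"

end

theory Submission
  imports Defs "HOL-Library.Cardinality"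
begin

text \<open>
  Each of \<open>\<^sub>1F\<^sub>1\<close>, \<open>\<^sub>2F\<^sub>0\<close>, \<open>\<^sub>0F\<^sub>1\<close> is a finite Mellin expansion \<open>\<Sum>\<^sub>\<nu> c(\<nu>) \<nu>(\<lambda>)\<close>, so a product
  of \<open>n\<close> of them is a sum over tuples \<open>(\<nu>\<^sub>1, \<dots>, \<nu>\<^sub>n)\<close> in which the summation variable \<open>t\<close>
  enters only through the single character \<open>\<nu>\<^sub>1 \<cdots> \<nu>\<^sub>n\<close> (evaluated at \<open>t\<close>, \<open>1/t\<close>, \<open>t\<^sup>2/4\<close> or \<open>st\<close>).
  Summing against the weight in \<open>t\<close> therefore produces a Gauss sum of a product character,
  and its quotient by the Gauss sum of the base character is exactly the Pochhammer symbol
  of the Lauricella series. Part (ii) uses \<open>g\<degree>(\<chi>) g(\<chi>\<inverse>) = \<chi>(-1) q\<close>, part (iii) the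
  Hasse--Davenport product formula \<open>g(\<chi>) g(\<chi>\<phi>) = g(\<chi>\<^sup>2) g(\<phi>) / \<chi>(4)\<close>, which follows from
  \<open>J(\<chi>, \<chi>) = J(\<chi>, \<phi>) / \<chi>(4)\<close>, and in part (iv) the double sum splits into two Gauss sums.
\<close>

section \<open>Multiplicative characters\<close>

lemma mchars_0: "\<chi> \<in> mchars \<Longrightarrow> \<chi> 0 = 0"
  by (simp add: mchars_def mult_char_def)

lemma mchars_1: "\<chi> \<in> mchars \<Longrightarrow> \<chi> 1 = 1"
  by (simp add: mchars_def mult_char_def)

lemma mchars_nonzero: "\<chi> \<in> mchars \<Longrightarrow> x \<noteq> 0 \<Longrightarrow> \<chi> x \<noteq> 0"
  by (simp add: mchars_def mult_char_def)

lemma mchars_mult: "\<chi> \<in> mchars \<Longrightarrow> \<chi> (x * y) = \<chi> x * \<chi> y"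
  by (cases "x = 0"; cases "y = 0") (auto simp: mchars_def mult_char_def)

lemma mchars_power: "\<chi> \<in> mchars \<Longrightarrow> \<chi> (x ^ k) = \<chi> x ^ k"
  by (induction k) (simp_all add: mchars_1 mchars_mult)

lemma mchars_inverse:
  assumes "\<chi> \<in> mchars"
  shows "\<chi> (inverse x) = inverse (\<chi> x)"
proof (cases "x = 0")
  case True
  then show ?thesis by (simp add: mchars_0[OF assms])
next
  case False
  then have "\<chi> x * \<chi> (inverse x) = 1"
    using assms by (simp flip: mchars_mult add: mchars_1)
  then show ?thesis by (metis inverse_unique)
qed

lemma mchars_divide: "\<chi> \<in> mchars \<Longrightarrow> \<chi> (x / y) = \<chi> x / \<chi> y"
  by (simp add: divide_inverse mchars_mult mchars_inverse)

lemma mchars_neg1_square: "\<chi> \<in> mchars \<Longrightarrow> \<chi> (-1) * \<chi> (-1) = 1"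
  by (simp flip: mchars_mult add: mchars_1)

lemma triv_char_mchars: "\<epsilon> \<in> mchars"
  by (simp add: mchars_def mult_char_def triv_char_def)

lemma cmul_mchars: "\<alpha> \<in> mchars \<Longrightarrow> \<beta> \<in> mchars \<Longrightarrow> cmul \<alpha> \<beta> \<in> mchars"
  by (auto simp: mchars_def mult_char_def cmul_def)

lemma cconj_mchars: "\<alpha> \<in> mchars \<Longrightarrow> cconj \<alpha> \<in> mchars"
  by (auto simp: mchars_def mult_char_def cconj_def)

lemma cmul_triv_char: "\<alpha> \<in> mchars \<Longrightarrow> cmul \<alpha> \<epsilon> = \<alpha>"
  by (rule ext) (simp add: cmul_def triv_char_def mchars_0)

lemma triv_char_cmul: "\<alpha> \<in> mchars \<Longrightarrow> cmul \<epsilon> \<alpha> = \<alpha>"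
  by (rule ext) (simp add: cmul_def triv_char_def mchars_0)

lemma cprod_mchars:
  assumes "n \<ge> 1" and "\<nu> \<in> PiE {1..n} (\<lambda>_. mchars)"
  shows "cprod n \<nu> \<in> mchars"
proof -
  have \<nu>: "\<nu> i \<in> mchars" if "i \<in> {1..n}" for i
    using assms(2) that by auto
  have "cprod n \<nu> 0 = 0"
    using assms(1) by (auto simp: cprod_def mchars_0[OF \<nu>] intro!: bexI[of _ 1])
  then show ?thesis
    by (auto simp: mchars_def mult_char_def cprod_def mchars_1[OF \<nu>] mchars_nonzero[OF \<nu>]
        mchars_mult[OF \<nu>] prod.distrib)
qed

lemma power_card_minus_one_eq_1:
  fixes x :: "'a::{field,finite}"
  assumes "x \<noteq> 0"
  shows "x ^ (CARD('a) - 1) = 1"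
proof -
  let ?U = "UNIV - {0::'a}"
  have "bij_betw (\<lambda>y. x * y) ?U ?U"
    using assms by (intro bij_betwI[where g="\<lambda>y. y / x"]) auto
  then have "(\<Prod>y\<in>?U. x * y) = (\<Prod>y\<in>?U. y)"
    using prod.reindex_bij_betw[of _ ?U ?U id] by simp
  moreover have "(\<Prod>y\<in>?U. x * y) = x ^ (CARD('a) - 1) * (\<Prod>y\<in>?U. y)"
    by (simp add: prod.distrib card_Diff_singleton)
  moreover have "(\<Prod>y\<in>?U. y) \<noteq> 0"
    by simp
  ultimately show ?thesis
    by simp
qed

lemma card_field_ge_2: "CARD('a::{field,finite}) \<ge> 2"
  using card_mono[of UNIV "{0::'a, 1}"] by simp

lemma finite_mchars: "finite (mchars :: ('a::{field,finite} \<Rightarrow> complex) set)"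
proof -
  let ?R = "insert 0 {z::complex. z ^ (CARD('a) - 1) = 1}"
  have "finite ?R"
    using card_field_ge_2[where 'a='a] by (auto intro!: finite_roots_unity)
  have "\<chi> x \<in> ?R" if \<chi>: "\<chi> \<in> mchars" for \<chi> :: "'a \<Rightarrow> complex" and x
  proof (cases "x = 0")
    case False
    then have "\<chi> x ^ (CARD('a) - 1) = 1"
      by (metis \<chi> mchars_power mchars_1 power_card_minus_one_eq_1)
    then show ?thesis
      by simp
  qed (simp add: mchars_0[OF \<chi>])
  then have "mchars \<subseteq> PiE (UNIV::'a set) (\<lambda>_. ?R)"
    by auto
  moreover have "finite (PiE (UNIV::'a set) (\<lambda>_. ?R))"
    using \<open>finite ?R\<close> by (intro finite_PiE) auto
  ultimately show ?thesis
    by (rule finite_subset)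
qed

lemma sum_nonzero_eq_sum: "f 0 = 0 \<Longrightarrow> (\<Sum>x\<in>UNIV - {0::'a::{zero,finite}}. f x) = (\<Sum>x\<in>UNIV. f x)"
  by (rule sum.mono_neutral_left) auto

lemma sum_mchars:
  fixes \<chi> :: "'a::{field,finite} \<Rightarrow> complex"
  assumes \<chi>: "\<chi> \<in> mchars"
  shows "(\<Sum>x\<in>UNIV. \<chi> x) = (if \<chi> = \<epsilon> then of_nat (CARD('a) - 1) else 0)"
proof (cases "\<chi> = \<epsilon>")
  case True
  have "(\<Sum>x\<in>UNIV. \<epsilon> (x::'a)) = (\<Sum>x\<in>UNIV - {0::'a}. 1)"
    by (subst sum_nonzero_eq_sum[symmetric]) (auto simp: triv_char_def)
  then show ?thesis
    using True by (simp add: card_Diff_singleton)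
next
  case False
  then obtain a where "\<chi> a \<noteq> \<epsilon> a"
    by auto
  then have "a \<noteq> 0" and "\<chi> a \<noteq> 1"
    using mchars_0[OF \<chi>] by (auto simp: triv_char_def split: if_splits)
  have "bij_betw (\<lambda>y. a * y) UNIV UNIV"
    using \<open>a \<noteq> 0\<close> by (intro bij_betwI[where g="\<lambda>y. y / a"]) auto
  then have "(\<Sum>x\<in>UNIV. \<chi> (a * x)) = (\<Sum>x\<in>UNIV. \<chi> x)"
    by (rule sum.reindex_bij_betw)
  then have "(\<chi> a - 1) * (\<Sum>x\<in>UNIV. \<chi> x) = 0"
    by (simp add: mchars_mult[OF \<chi>] sum_distrib_left algebra_simps)
  then show ?thesis
    using False \<open>\<chi> a \<noteq> 1\<close> by simp
qed

section \<open>Gauss and Jacobi sums\<close>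

definition jacobi_sum :: "('a::{field,finite} \<Rightarrow> complex) \<Rightarrow> ('a \<Rightarrow> complex) \<Rightarrow> complex" where
  "jacobi_sum \<alpha> \<beta> = (\<Sum>x\<in>UNIV. \<alpha> x * \<beta> (1 - x))"

locale nontrivial_add_char =
  fixes \<psi> :: "'a::{field,finite} \<Rightarrow> complex"
  assumes nontrivial: "nontriv_add_char \<psi>"
begin

lemma psi_add: "\<psi> (x + y) = \<psi> x * \<psi> y"
  using nontrivial by (simp add: nontriv_add_char_def)

lemma psi_0: "\<psi> 0 = 1"
proof -
  have "\<psi> 0 * \<psi> 0 = \<psi> 0 * 1" and "\<psi> 0 \<noteq> 0"
    using psi_add[of 0 0] nontrivial by (simp_all add: nontriv_add_char_def)
  then show ?thesis
    by (metis mult_left_cancel)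
qed

lemma sum_psi: "(\<Sum>x\<in>UNIV. \<psi> x) = 0"
proof -
  obtain a where a: "\<psi> a \<noteq> 1"
    using nontrivial by (auto simp: nontriv_add_char_def)
  have "bij_betw (\<lambda>y. y + a) UNIV UNIV"
    by (intro bij_betwI[where g="\<lambda>y. y - a"]) auto
  then have "(\<Sum>x\<in>UNIV. \<psi> (x + a)) = (\<Sum>x\<in>UNIV. \<psi> x)"
    by (rule sum.reindex_bij_betw)
  then have "(\<psi> a - 1) * (\<Sum>x\<in>UNIV. \<psi> x) = 0"
    by (simp add: psi_add sum_distrib_left algebra_simps)
  then show ?thesis
    using a by simp
qed

lemma sum_psi_scaled:
  "(\<Sum>x\<in>UNIV - {0}. \<psi> (c * x)) = (if c = 0 then of_nat CARD('a) - 1 else -1)"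
proof (cases "c = 0")
  case True
  then show ?thesis
    by (simp add: psi_0 card_Diff_singleton)
next
  case False
  have "bij_betw (\<lambda>y. c * y) UNIV UNIV"
    using False by (intro bij_betwI[where g="\<lambda>y. y / c"]) auto
  then have "(\<Sum>x\<in>UNIV. \<psi> (c * x)) = 0"
    using sum.reindex_bij_betw[of _ UNIV UNIV \<psi>] sum_psi by simp
  then show ?thesis
    using False by (simp add: sum.remove[of UNIV 0] psi_0 eq_neg_iff_add_eq_0 add.commute)
qed

lemma gauss_eq_sum_UNIV: "\<chi> \<in> mchars \<Longrightarrow> gauss \<psi> \<chi> = - (\<Sum>x\<in>UNIV. \<psi> x * \<chi> x)"
  unfolding gauss_def by (subst sum_nonzero_eq_sum) (auto simp: mchars_0)

lemma gauss_triv_char: "gauss \<psi> \<epsilon> = 1"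
proof -
  have "gauss \<psi> \<epsilon> = - (\<Sum>x\<in>UNIV - {0}. \<psi> (1 * x))"
    unfolding gauss_def by (intro arg_cong[where f=uminus] sum.cong) (auto simp: triv_char_def)
  then show ?thesis
    by (simp only: sum_psi_scaled) simp
qed

lemma sum_psi_scaled_mchars:
  assumes \<chi>: "\<chi> \<in> mchars" and "c \<noteq> 0"
  shows "(\<Sum>x\<in>UNIV. \<psi> (c * x) * \<chi> x) = - inverse (\<chi> c) * gauss \<psi> \<chi>"
proof -
  have "bij_betw (\<lambda>y. c * y) UNIV UNIV"
    using \<open>c \<noteq> 0\<close> by (intro bij_betwI[where g="\<lambda>y. y / c"]) auto
  then have "(\<Sum>x\<in>UNIV. \<psi> (c * x) * \<chi> (c * x / c)) = (\<Sum>y\<in>UNIV. \<psi> y * \<chi> (y / c))"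
    by (rule sum.reindex_bij_betw)
  then have "(\<Sum>x\<in>UNIV. \<psi> (c * x) * \<chi> x) = (\<Sum>y\<in>UNIV. \<psi> y * \<chi> (y / c))"
    using \<open>c \<noteq> 0\<close> by simp
  also have "\<dots> = inverse (\<chi> c) * (\<Sum>y\<in>UNIV. \<psi> y * \<chi> y)"
    by (simp add: divide_inverse mchars_mult[OF \<chi>] mchars_inverse[OF \<chi>] sum_distrib_left mult_ac)
  finally show ?thesis
    by (simp add: gauss_eq_sum_UNIV[OF \<chi>])
qed

text \<open>Substituting \<open>x = y u\<close> in the double sum over \<open>x\<close> and \<open>y \<noteq> 0\<close> leaves
  \<open>\<Sum>\<^sub>u \<chi>(u) \<Sum>\<^sub>y\<^sub>\<noteq>\<^sub>0 \<psi>(y (u + 1))\<close>, in which only \<open>u = -1\<close> survives.\<close>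

lemma gauss_mult_gauss_cconj:
  assumes \<chi>: "\<chi> \<in> mchars" and "\<chi> \<noteq> \<epsilon>"
  shows "gauss \<psi> \<chi> * gauss \<psi> (cconj \<chi>) = \<chi> (-1) * of_nat CARD('a)"
proof -
  let ?U = "UNIV - {0::'a}"
  have inner: "(\<Sum>x\<in>UNIV. \<psi> x * \<chi> x * (\<psi> y * cconj \<chi> y)) = (\<Sum>u\<in>UNIV. \<psi> (y * (u + 1)) * \<chi> u)"
    if "y \<in> ?U" for y
  proof -
    have unit: "\<chi> y * cconj \<chi> y = 1"
      using mchars_nonzero[OF \<chi>, of y] that by (simp add: cconj_def)
    have "bij_betw (\<lambda>u. y * u) UNIV UNIV"
      using that by (intro bij_betwI[where g="\<lambda>u. u / y"]) auto
    then have "(\<Sum>x\<in>UNIV. \<psi> x * \<chi> x * (\<psi> y * cconj \<chi> y))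
        = (\<Sum>u\<in>UNIV. \<psi> (y * u) * \<chi> (y * u) * (\<psi> y * cconj \<chi> y))"
      by (rule sum.reindex_bij_betw[symmetric])
    also have "\<dots> = (\<Sum>u\<in>UNIV. \<psi> (y * (u + 1)) * \<chi> u)"
    proof (intro sum.cong refl)
      fix u
      have "\<psi> (y * (u + 1)) = \<psi> (y * u) * \<psi> y"
        using psi_add[of "y * u" y] by (simp add: distrib_left)
      then show "\<psi> (y * u) * \<chi> (y * u) * (\<psi> y * cconj \<chi> y) = \<psi> (y * (u + 1)) * \<chi> u"
        using unit by (simp add: mchars_mult[OF \<chi>] mult_ac)
    qed
    finally show ?thesis .
  qed
  have "gauss \<psi> \<chi> * gauss \<psi> (cconj \<chi>) = (\<Sum>x\<in>UNIV. \<psi> x * \<chi> x) * (\<Sum>y\<in>?U. \<psi> y * cconj \<chi> y)"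
    by (simp add: gauss_eq_sum_UNIV[OF \<chi>] gauss_def[of \<psi> "cconj \<chi>"])
  also have "\<dots> = (\<Sum>y\<in>?U. \<Sum>x\<in>UNIV. \<psi> x * \<chi> x * (\<psi> y * cconj \<chi> y))"
    unfolding sum_product by (rule sum.swap)
  also have "\<dots> = (\<Sum>y\<in>?U. \<Sum>u\<in>UNIV. \<psi> (y * (u + 1)) * \<chi> u)"
    by (rule sum.cong[OF refl inner])
  also have "\<dots> = (\<Sum>u\<in>UNIV. \<chi> u * (\<Sum>y\<in>?U. \<psi> ((u + 1) * y)))"
    by (subst sum.swap) (simp add: sum_distrib_left mult.commute)
  also have "\<dots> = (\<Sum>u\<in>UNIV. \<chi> u * (if u = -1 then of_nat CARD('a) else 0) - \<chi> u)"
    by (intro sum.cong refl, simp only: sum_psi_scaled) (auto simp: eq_neg_iff_add_eq_0 algebra_simps)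
  also have "\<dots> = \<chi> (-1) * of_nat CARD('a)"
    using sum_mchars[OF \<chi>] \<open>\<chi> \<noteq> \<epsilon>\<close>
    by (simp add: sum_subtractf if_distrib[of "\<lambda>v. \<chi> _ * v"] cong: if_cong)
  finally show ?thesis .
qed

lemma gauss_nonzero:
  assumes \<chi>: "\<chi> \<in> mchars"
  shows "gauss \<psi> \<chi> \<noteq> 0"
proof (cases "\<chi> = \<epsilon>")
  case True
  then show ?thesis
    by (simp add: gauss_triv_char)
next
  case False
  then show ?thesis
    using gauss_mult_gauss_cconj[OF \<chi> False] mchars_nonzero[OF \<chi>, of "-1"] by auto
qed

lemma gauss0_mult_gauss_cconj:
  assumes \<chi>: "\<chi> \<in> mchars"
  shows "gauss0 \<psi> \<chi> * gauss \<psi> (cconj \<chi>) = \<chi> (-1) * of_nat CARD('a)"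
proof (cases "\<chi> = \<epsilon>")
  case True
  moreover have "cconj \<epsilon> = (\<epsilon> :: 'a \<Rightarrow> complex)"
    by (rule ext) (simp add: cconj_def triv_char_def)
  ultimately show ?thesis
    by (simp add: gauss0_def kdelta_def gauss_triv_char triv_char_def)
next
  case False
  then show ?thesis
    using gauss_mult_gauss_cconj[OF \<chi> False] by (simp add: gauss0_def kdelta_def)
qed

lemma gauss0_nonzero: "\<chi> \<in> mchars \<Longrightarrow> gauss0 \<psi> \<chi> \<noteq> 0"
  by (simp add: gauss0_def gauss_nonzero)

lemma gauss_mult_poch: "\<alpha> \<in> mchars \<Longrightarrow> gauss \<psi> \<alpha> * poch \<psi> \<alpha> \<nu> = gauss \<psi> (cmul \<alpha> \<nu>)"
  by (simp add: poch_def gauss_nonzero)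

lemma gauss0_mult_poch0: "\<alpha> \<in> mchars \<Longrightarrow> gauss0 \<psi> \<alpha> * poch0 \<psi> \<alpha> \<nu> = gauss0 \<psi> (cmul \<alpha> \<nu>)"
  by (simp add: poch0_def gauss0_nonzero)

lemma sum_psi_neg_cconj:
  assumes \<eta>: "\<eta> \<in> mchars"
  shows "(\<Sum>t\<in>UNIV - {0}. \<psi> (- t) * cconj \<eta> t) = - (of_nat CARD('a) / gauss0 \<psi> \<eta>)"
proof -
  have "(\<Sum>t\<in>UNIV - {0}. \<psi> (- t) * cconj \<eta> t) = (\<Sum>t\<in>UNIV. \<psi> ((-1) * t) * cconj \<eta> t)"
    by (subst sum_nonzero_eq_sum) (simp_all add: mchars_0[OF cconj_mchars[OF \<eta>]])
  also have "\<dots> = - \<eta> (-1) * gauss \<psi> (cconj \<eta>)"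
    using sum_psi_scaled_mchars[OF cconj_mchars[OF \<eta>], of "-1"] by (simp add: cconj_def)
  also have "gauss \<psi> (cconj \<eta>) = \<eta> (-1) * of_nat CARD('a) / gauss0 \<psi> \<eta>"
    using gauss0_mult_gauss_cconj[OF \<eta>] gauss0_nonzero[OF \<eta>] by (simp add: eq_divide_eq mult.commute)
  also have "- \<eta> (-1) * (\<eta> (-1) * of_nat CARD('a) / gauss0 \<psi> \<eta>)
      = - (\<eta> (-1) * \<eta> (-1)) * (of_nat CARD('a) / gauss0 \<psi> \<eta>)"
    by (simp only: times_divide_eq_right mult.assoc mult_minus_left)
  finally show ?thesis
    by (simp only: mchars_neg1_square[OF \<eta>] mult_1 mult_minus_left)
qed

text \<open>Substitute \<open>x = u s\<close>; for \<open>u = 0\<close> the sum is \<open>\<beta>(-1) \<Sum>\<^sub>x \<alpha>\<beta>(x)\<close>, which vanishes as \<open>\<alpha>\<beta> \<noteq> \<epsilon>\<close>.\<close>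

lemma convolution_mchars:
  assumes \<alpha>: "\<alpha> \<in> mchars" and \<beta>: "\<beta> \<in> mchars" and "cmul \<alpha> \<beta> \<noteq> \<epsilon>"
  shows "(\<Sum>x\<in>UNIV. \<alpha> x * \<beta> (u - x)) = cmul \<alpha> \<beta> u * jacobi_sum \<alpha> \<beta>"
proof (cases "u = 0")
  case True
  have "\<beta> (u - x) = \<beta> (-1) * \<beta> x" for x
    using True mchars_mult[OF \<beta>, of "-1" x] by simp
  then have "(\<Sum>x\<in>UNIV. \<alpha> x * \<beta> (u - x)) = \<beta> (-1) * (\<Sum>x\<in>UNIV. cmul \<alpha> \<beta> x)"
    by (simp add: cmul_def sum_distrib_left mult_ac)
  then show ?thesis
    using True sum_mchars[OF cmul_mchars[OF \<alpha> \<beta>]] assms(3) by (simp add: cmul_def mchars_0[OF \<alpha>])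
next
  case False
  have "bij_betw (\<lambda>s. u * s) UNIV UNIV"
    using False by (intro bij_betwI[where g="\<lambda>s. s / u"]) auto
  then have "(\<Sum>s\<in>UNIV. \<alpha> (u * s) * \<beta> (u - u * s)) = (\<Sum>x\<in>UNIV. \<alpha> x * \<beta> (u - x))"
    by (rule sum.reindex_bij_betw)
  then have "(\<Sum>x\<in>UNIV. \<alpha> x * \<beta> (u - x)) = (\<Sum>s\<in>UNIV. \<alpha> (u * s) * \<beta> (u * (1 - s)))"
    by (simp add: algebra_simps)
  then show ?thesis
    by (simp add: jacobi_sum_def mchars_mult[OF \<alpha>] mchars_mult[OF \<beta>] cmul_def sum_distrib_left mult_ac)
qed

lemma gauss_mult_gauss:
  assumes \<alpha>: "\<alpha> \<in> mchars" and \<beta>: "\<beta> \<in> mchars" and "cmul \<alpha> \<beta> \<noteq> \<epsilon>"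
  shows "gauss \<psi> \<alpha> * gauss \<psi> \<beta> = - jacobi_sum \<alpha> \<beta> * gauss \<psi> (cmul \<alpha> \<beta>)"
proof -
  have inner: "(\<Sum>y\<in>UNIV. \<psi> x * \<alpha> x * (\<psi> y * \<beta> y)) = (\<Sum>u\<in>UNIV. \<psi> u * (\<alpha> x * \<beta> (u - x)))"
    for x
  proof -
    have "(\<Sum>y\<in>UNIV. \<psi> x * \<alpha> x * (\<psi> y * \<beta> y))
        = (\<Sum>u\<in>UNIV. \<psi> x * \<alpha> x * (\<psi> (u - x) * \<beta> (u - x)))"
      by (rule sum.reindex_bij_betw[symmetric]) (intro bij_betwI[where g="\<lambda>u. u + x"], auto)
    also have "\<dots> = (\<Sum>u\<in>UNIV. \<psi> u * (\<alpha> x * \<beta> (u - x)))"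
    proof (intro sum.cong refl)
      fix u
      have "\<psi> u = \<psi> x * \<psi> (u - x)"
        using psi_add[of x "u - x"] by simp
      then show "\<psi> x * \<alpha> x * (\<psi> (u - x) * \<beta> (u - x)) = \<psi> u * (\<alpha> x * \<beta> (u - x))"
        by (simp add: mult_ac)
    qed
    finally show ?thesis .
  qed
  have "gauss \<psi> \<alpha> * gauss \<psi> \<beta> = (\<Sum>x\<in>UNIV. \<Sum>u\<in>UNIV. \<psi> u * (\<alpha> x * \<beta> (u - x)))"
    by (simp add: gauss_eq_sum_UNIV[OF \<alpha>] gauss_eq_sum_UNIV[OF \<beta>] sum_product inner)
  also have "\<dots> = (\<Sum>u\<in>UNIV. \<psi> u * (\<Sum>x\<in>UNIV. \<alpha> x * \<beta> (u - x)))"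
    by (subst sum.swap) (simp add: sum_distrib_left)
  also have "\<dots> = jacobi_sum \<alpha> \<beta> * (\<Sum>u\<in>UNIV. \<psi> u * cmul \<alpha> \<beta> u)"
    by (simp add: convolution_mchars[OF assms] sum_distrib_left mult_ac)
  finally show ?thesis
    by (simp add: gauss_eq_sum_UNIV[OF cmul_mchars[OF \<alpha> \<beta>]])
qed

end

section \<open>The quadratic character and the duplication formula\<close>

definition is_square :: "'a::{field,finite} \<Rightarrow> bool" where
  "is_square x \<longleftrightarrow> (\<exists>w. w ^ 2 = x)"

lemma quad_char_eq: "quad_char x = (if x = 0 then 0 else if is_square x then 1 else -1)"
  by (simp add: quad_char_def is_square_def)

lemma is_square_0: "is_square 0"
  by (auto simp: is_square_def)

lemma is_square_mult: "is_square x \<Longrightarrow> is_square y \<Longrightarrow> is_square (x * y)"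
  unfolding is_square_def by (metis power_mult_distrib)

lemma is_square_mult_cancel: "is_square x \<Longrightarrow> x \<noteq> 0 \<Longrightarrow> is_square (x * y) \<longleftrightarrow> is_square y"
proof
  assume "is_square x" "x \<noteq> 0" "is_square (x * y)"
  then obtain w v where "w ^ 2 = x" "v ^ 2 = x * y"
    by (auto simp: is_square_def)
  with \<open>x \<noteq> 0\<close> have "(v / w) ^ 2 = y"
    by (simp add: power_divide)
  then show "is_square y"
    by (auto simp: is_square_def)
qed (rule is_square_mult)

lemma two_nonzero_if_CHAR_neq_2:
  assumes "CHAR('a::{field,finite}) \<noteq> 2"
  shows "(2::'a) \<noteq> 0"
proof
  assume "(2::'a) = 0"
  then have "CHAR('a) dvd 2"
    using of_nat_eq_0_iff_char_dvd[where 'a='a, of 2] by simp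
  then have "CHAR('a) \<le> 2" and "CHAR('a) \<noteq> 0"
    by (rule dvd_imp_le, simp) (metis \<open>CHAR('a) dvd 2\<close> dvd_0_left_iff zero_neq_numeral)
  then show False
    using assms CHAR_not_1[where 'a='a] by linarith
qed

lemma four_nonzero: "(2::'a::field) \<noteq> 0 \<Longrightarrow> (4::'a) \<noteq> 0"
  by (metis mult_eq_0_iff num_double numeral_times_numeral)

lemma card_square_roots:
  fixes y :: "'a::{field,finite}"
  assumes two: "(2::'a) \<noteq> 0"
  shows "of_nat (card {z. z ^ 2 = y}) = 1 + quad_char y"
proof (cases "y \<noteq> 0 \<and> is_square y")
  case True
  then obtain w where w: "w ^ 2 = y" "w \<noteq> 0"
    by (auto simp: is_square_def)
  have "z ^ 2 = w ^ 2 \<longleftrightarrow> z = w \<or> z = - w" for z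
  proof -
    have "z ^ 2 - w ^ 2 = (z - w) * (z + w)"
      by (simp add: algebra_simps power2_eq_square)
    then show ?thesis
      by (auto simp: eq_neg_iff_add_eq_0)
  qed
  then have "{z. z ^ 2 = y} = {w, -w}"
    using w(1) by auto
  moreover have "w \<noteq> - w"
    using two w(2) by (metis add.right_inverse mult_2 mult_eq_0_iff)
  ultimately show ?thesis
    using True by (simp add: quad_char_eq)
next
  case False
  then have "{z. z ^ 2 = y} = (if y = 0 then {0} else {})"
    by (auto simp: is_square_def)
  then show ?thesis
    using False by (auto simp: quad_char_eq)
qed

lemma sum_square_substitution:
  fixes h :: "'a::{field,finite} \<Rightarrow> complex"
  assumes "(2::'a) \<noteq> 0"
  shows "(\<Sum>z\<in>UNIV. h (z ^ 2)) = (\<Sum>y\<in>UNIV. h y * (1 + quad_char y))"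
proof -
  have "(\<Sum>z\<in>UNIV. h (z ^ 2)) = (\<Sum>y\<in>UNIV. \<Sum>z\<in>{z. z \<in> UNIV \<and> z ^ 2 = y}. h (z ^ 2))"
    by (rule sum.group[symmetric]) auto
  also have "\<dots> = (\<Sum>y\<in>UNIV. h y * of_nat (card {z. z ^ 2 = y}))"
    by (intro sum.cong refl) simp
  finally show ?thesis
    by (simp add: card_square_roots[OF assms])
qed

lemma sum_quad_char:
  assumes "(2::'a::{field,finite}) \<noteq> 0"
  shows "(\<Sum>y\<in>(UNIV::'a set). quad_char y) = 0"
proof -
  have "(\<Sum>z\<in>(UNIV::'a set). \<epsilon> (z ^ 2)) = (\<Sum>z\<in>UNIV. \<epsilon> (z::'a))"
    by (simp add: triv_char_def)
  moreover have "\<epsilon> y * (1 + quad_char y) = \<epsilon> y + quad_char y" for y :: 'a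
    by (simp add: triv_char_def quad_char_def)
  ultimately show ?thesis
    using sum_square_substitution[OF assms, of \<epsilon>] by (simp add: sum.distrib)
qed

lemma card_squares_eq_card_nonsquares:
  assumes "(2::'a::{field,finite}) \<noteq> 0"
  shows "card {y::'a. y \<noteq> 0 \<and> is_square y} = card {y::'a. y \<noteq> 0 \<and> \<not> is_square y}"
proof -
  let ?S = "{y::'a. y \<noteq> 0 \<and> is_square y}" and ?N = "{y::'a. y \<noteq> 0 \<and> \<not> is_square y}"
  have U: "(UNIV::'a set) = {0} \<union> (?S \<union> ?N)"
    by auto
  have "(\<Sum>y\<in>(UNIV::'a set). quad_char y) = (\<Sum>y\<in>{0} \<union> (?S \<union> ?N). quad_char y)"
    by (subst U) (rule refl)
  also have "\<dots> = quad_char (0::'a) + (\<Sum>y\<in>?S \<union> ?N. quad_char y)"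
    by (subst sum.union_disjoint) auto
  also have "\<dots> = quad_char (0::'a) + ((\<Sum>y\<in>?S. quad_char y) + (\<Sum>y\<in>?N. quad_char y))"
    by (subst sum.union_disjoint) auto
  also have "\<dots> = of_nat (card ?S) - of_nat (card ?N)"
    by (simp add: quad_char_eq)
  finally show ?thesis
    using sum_quad_char[OF assms] by simp
qed

text \<open>Multiplication by a non-square maps the non-zero squares injectively into the
  non-squares; these sets have the same size, so the map is onto.\<close>

lemma nonsquare_mult_nonsquare:
  fixes a b :: "'a::{field,finite}"
  assumes "(2::'a) \<noteq> 0" and a: "\<not> is_square a" and b: "\<not> is_square b"
  shows "is_square (a * b)"
proof -
  let ?S = "{y::'a. y \<noteq> 0 \<and> is_square y}" and ?N = "{y::'a. y \<noteq> 0 \<and> \<not> is_square y}"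
  have "a \<noteq> 0" "b \<noteq> 0"
    using a b is_square_0 by auto
  have "is_square (a * y) \<longleftrightarrow> is_square a" if "is_square y" "y \<noteq> 0" for y
    using is_square_mult_cancel[OF that, of a] by (simp add: mult.commute)
  then have sub: "(\<lambda>y. a * y) ` ?S \<subseteq> ?N"
    using \<open>a \<noteq> 0\<close> a by auto
  have "inj_on (\<lambda>y. a * y) ?S"
    using \<open>a \<noteq> 0\<close> by (auto intro: inj_onI)
  then have "card ((\<lambda>y. a * y) ` ?S) = card ?N"
    using card_squares_eq_card_nonsquares[OF assms(1)] by (simp add: card_image)
  then have "(\<lambda>y. a * y) ` ?S = ?N"
    using sub by (intro card_subset_eq) auto
  then have "b \<in> (\<lambda>y. a * y) ` ?S"
    using \<open>b \<noteq> 0\<close> b by simp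
  then obtain y where "is_square y" "b = a * y"
    by blast
  then have "a * b = a ^ 2 * y"
    by (simp add: power2_eq_square)
  then show ?thesis
    using \<open>is_square y\<close> by (metis is_square_def is_square_mult)
qed

lemma quad_char_mchars:
  assumes "(2::'a::{field,finite}) \<noteq> 0"
  shows "(quad_char :: 'a \<Rightarrow> complex) \<in> mchars"
proof -
  have "quad_char (x * y) = quad_char x * quad_char (y::'a)" if "x \<noteq> 0" "y \<noteq> 0" for x y
  proof -
    consider "is_square x" | "is_square y" | "\<not> is_square x" "\<not> is_square y"
      by blast
    then show ?thesis
    proof cases
      case 1
      then show ?thesis
        using that by (simp add: quad_char_eq is_square_mult_cancel)
    next
      case 2
      then show ?thesis
        using that is_square_mult_cancel[of y x] by (simp add: quad_char_eq mult.commute)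
    next
      case 3
      then show ?thesis
        using that nonsquare_mult_nonsquare[OF assms] by (simp add: quad_char_eq)
    qed
  qed
  moreover have "is_square (1::'a)"
    by (auto simp: is_square_def intro: exI[of _ 1])
  ultimately show ?thesis
    by (auto simp: mchars_def mult_char_def quad_char_eq)
qed

lemma cmul_quad_char_self: "cmul quad_char quad_char = \<epsilon>"
  by (rule ext) (simp add: cmul_def quad_char_eq triv_char_def)

lemma mchars_square_eq_triv_char:
  fixes \<chi> :: "'a::{field,finite} \<Rightarrow> complex"
  assumes "(2::'a) \<noteq> 0" and \<chi>: "\<chi> \<in> mchars" and sq: "cmul \<chi> \<chi> = \<epsilon>"
  shows "\<chi> = \<epsilon> \<or> \<chi> = quad_char"
proof (cases "\<chi> = \<epsilon>")
  case False
  have sq_x: "\<chi> x * \<chi> x = 1" if "x \<noteq> 0" for x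
    using fun_cong[OF sq, of x] that by (simp add: cmul_def triv_char_def)
  have on_squares: "\<chi> x = 1" if x: "is_square x" "x \<noteq> 0" for x
  proof -
    obtain w where "w ^ 2 = x"
      using x(1) unfolding is_square_def by blast
    then show ?thesis
      using sq_x[of w] x(2) by (auto simp: power2_eq_square mchars_mult[OF \<chi>])
  qed
  obtain a where "\<chi> a \<noteq> \<epsilon> a"
    using \<open>\<chi> \<noteq> \<epsilon>\<close> by auto
  then have "a \<noteq> 0"
    using mchars_0[OF \<chi>] by (auto simp: triv_char_def)
  then have a: "\<chi> a = -1"
    using sq_x[of a] \<open>\<chi> a \<noteq> \<epsilon> a\<close> square_eq_1_iff[of "\<chi> a"] by (auto simp: triv_char_def)
  then have "\<not> is_square a"
    using on_squares[of a] \<open>a \<noteq> 0\<close> by auto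
  have "\<chi> x = quad_char x" for x
  proof (cases "x = 0 \<or> is_square x")
    case True
    then show ?thesis
      using on_squares by (auto simp: mchars_0[OF \<chi>] quad_char_eq)
  next
    case False
    then have "\<chi> (a * x) = 1"
      using on_squares[of "a * x"] nonsquare_mult_nonsquare[OF assms(1) \<open>\<not> is_square a\<close>, of x] \<open>a \<noteq> 0\<close>
      by simp
    then show ?thesis
      using False a by (simp add: mchars_mult[OF \<chi>] quad_char_eq minus_equation_iff)
  qed
  then show ?thesis
    by (simp add: fun_eq_iff)
qed simp

text \<open>Completing the square, \<open>x (1 - x) = (1 - (2x - 1)\<^sup>2) / 4\<close>, turns \<open>J(\<chi>, \<chi>)\<close> into a sum
  over squares, that is, a sum over all \<open>y\<close> weighted by \<open>1 + \<phi>(y)\<close>.\<close>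

lemma jacobi_sum_self:
  fixes \<chi> :: "'a::{field,finite} \<Rightarrow> complex"
  assumes two: "(2::'a) \<noteq> 0" and \<chi>: "\<chi> \<in> mchars" and "\<chi> \<noteq> \<epsilon>"
  shows "jacobi_sum \<chi> \<chi> = jacobi_sum \<chi> quad_char / \<chi> 4"
proof -
  have four: "(4::'a) \<noteq> 0"
    using four_nonzero[OF two] .
  have square: "x * (1 - x) = (1 - (2 * x - 1) ^ 2) / 4" for x :: 'a
    using four by (simp add: field_simps power2_eq_square)
  have "jacobi_sum \<chi> \<chi> = (\<Sum>x\<in>UNIV. \<chi> ((1 - (2 * x - 1) ^ 2) / 4))"
    by (simp add: jacobi_sum_def flip: mchars_mult[OF \<chi>] square)
  also have "\<dots> = (\<Sum>z\<in>UNIV. \<chi> ((1 - z ^ 2) / 4))"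
  proof (rule sum.reindex_bij_betw[where h="\<lambda>x. 2 * x - 1" and g="\<lambda>z. \<chi> ((1 - z ^ 2) / 4)"])
    show "bij_betw (\<lambda>x. 2 * x - 1) UNIV (UNIV::'a set)"
      using two by (intro bij_betwI[where g="\<lambda>z. (z + 1) / 2"]) (auto simp: field_simps)
  qed
  also have "\<dots> = (\<Sum>y\<in>UNIV. \<chi> ((1 - y) / 4)) + (\<Sum>y\<in>UNIV. \<chi> ((1 - y) / 4) * quad_char y)"
    using sum_square_substitution[OF two, of "\<lambda>y. \<chi> ((1 - y) / 4)"] by (simp add: distrib_left sum.distrib)
  also have "(\<Sum>y\<in>UNIV. \<chi> ((1 - y) / 4)) = (\<Sum>w\<in>UNIV. \<chi> w)"
  proof (rule sum.reindex_bij_betw[where h="\<lambda>y. (1 - y) / 4" and g=\<chi>])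
    show "bij_betw (\<lambda>y. (1 - y) / 4) UNIV (UNIV::'a set)"
      using four by (intro bij_betwI[where g="\<lambda>w. 1 - 4 * w"]) (auto simp: field_simps)
  qed
  also have "\<dots> = 0"
    using sum_mchars[OF \<chi>] \<open>\<chi> \<noteq> \<epsilon>\<close> by simp
  also have "(\<Sum>y\<in>UNIV. \<chi> ((1 - y) / 4) * quad_char y) = (\<Sum>y\<in>UNIV. \<chi> (1 - y) * quad_char y) / \<chi> 4"
    by (simp add: mchars_divide[OF \<chi>] sum_divide_distrib)
  also have "(\<Sum>y\<in>UNIV. \<chi> (1 - y) * quad_char y) = jacobi_sum \<chi> quad_char"
  proof -
    have "bij_betw (\<lambda>x. 1 - x) UNIV (UNIV::'a set)"
      by (intro bij_betwI[where g="\<lambda>x. 1 - x"]) auto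
    then have "(\<Sum>x\<in>UNIV. \<chi> (1 - (1 - x)) * quad_char (1 - x)) = (\<Sum>y\<in>UNIV. \<chi> (1 - y) * quad_char y)"
      by (rule sum.reindex_bij_betw)
    then show ?thesis
      by (simp add: jacobi_sum_def)
  qed
  finally show ?thesis
    by simp
qed

context nontrivial_add_char
begin

lemma gauss_duplication:
  assumes two: "(2::'a) \<noteq> 0" and \<chi>: "\<chi> \<in> mchars"
  shows "gauss \<psi> \<chi> * gauss \<psi> (cmul \<chi> quad_char) = gauss \<psi> (cmul \<chi> \<chi>) * gauss \<psi> quad_char / \<chi> 4"
proof (cases "cmul \<chi> \<chi> = \<epsilon>")
  case True
  have "(4::'a) \<noteq> 0"
    using four_nonzero[OF two] .
  moreover have "is_square (4::'a)"
    unfolding is_square_def by (rule exI[of _ 2]) simp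
  ultimately have "quad_char (4::'a) = 1" and "\<epsilon> (4::'a) = 1"
    by (simp_all add: quad_char_eq triv_char_def)
  then show ?thesis
    using mchars_square_eq_triv_char[OF two \<chi> True] True
    by (auto simp: triv_char_cmul[OF quad_char_mchars[OF two]] gauss_triv_char)
next
  case False
  have \<phi>: "(quad_char :: 'a \<Rightarrow> complex) \<in> mchars"
    by (rule quad_char_mchars[OF two])
  have "\<chi> \<noteq> \<epsilon>"
    using False cmul_triv_char[OF triv_char_mchars] by auto
  have "cmul \<chi> quad_char \<noteq> \<epsilon>"
  proof
    assume triv: "cmul \<chi> quad_char = \<epsilon>"
    have "\<chi> x = quad_char x" for x
    proof (cases "x = 0")
      case False
      have "\<chi> x * quad_char x = 1"
        using fun_cong[OF triv, of x] False by (simp add: cmul_def triv_char_def)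
      moreover have "quad_char x * quad_char x = 1"
        using False by (simp add: quad_char_eq)
      ultimately show ?thesis
        by (metis mult.assoc mult_1_left mult_1_right)
    qed (simp add: mchars_0[OF \<chi>] quad_char_def)
    then have "\<chi> = quad_char"
      by (rule ext)
    then show False
      using False cmul_quad_char_self[where 'a='a] by simp
  qed
  note \<chi>\<chi> = gauss_mult_gauss[OF \<chi> \<chi> False]
    and \<chi>\<phi> = gauss_mult_gauss[OF \<chi> \<phi> \<open>cmul \<chi> quad_char \<noteq> \<epsilon>\<close>]
  have J: "jacobi_sum \<chi> quad_char \<noteq> 0"
    using \<chi>\<phi> gauss_nonzero[OF \<chi>] gauss_nonzero[OF \<phi>] by auto
  have "jacobi_sum \<chi> quad_char * (gauss \<psi> \<chi> * gauss \<psi> (cmul \<chi> quad_char))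
      = - (gauss \<psi> \<chi> * (- jacobi_sum \<chi> quad_char * gauss \<psi> (cmul \<chi> quad_char)))"
    by (simp add: algebra_simps)
  also have "\<dots> = - (gauss \<psi> \<chi> * gauss \<psi> \<chi> * gauss \<psi> quad_char)"
    by (simp only: \<chi>\<phi> [symmetric] mult.assoc)
  also have "\<dots> = jacobi_sum \<chi> \<chi> * gauss \<psi> (cmul \<chi> \<chi>) * gauss \<psi> quad_char"
    by (simp add: \<chi>\<chi>)
  also have "\<dots> = jacobi_sum \<chi> quad_char * (gauss \<psi> (cmul \<chi> \<chi>) * gauss \<psi> quad_char / \<chi> 4)"
    by (simp add: jacobi_sum_self[OF two \<chi> \<open>\<chi> \<noteq> \<epsilon>\<close>] mult_ac)
  finally show ?thesis
    by (rule mult_left_cancel[OF J, THEN iffD1])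
qed

lemma poch_duplication:
  assumes two: "(2::'a) \<noteq> 0" and \<alpha>: "\<alpha> \<in> mchars" and \<mu>: "\<mu> \<in> mchars"
  shows "gauss \<psi> (cmul \<alpha> \<alpha>) * (poch \<psi> \<alpha> \<mu> * poch \<psi> (cmul \<alpha> quad_char) \<mu>)
    = gauss \<psi> (cmul (cmul \<alpha> \<mu>) (cmul \<alpha> \<mu>)) / \<mu> 4"
proof -
  let ?A = "gauss \<psi> \<alpha> * gauss \<psi> (cmul \<alpha> quad_char)"
  let ?B = "gauss \<psi> (cmul \<alpha> \<mu>) * gauss \<psi> (cmul (cmul \<alpha> \<mu>) quad_char)"
  have A: "?A = gauss \<psi> (cmul \<alpha> \<alpha>) * gauss \<psi> quad_char / \<alpha> 4"
    by (rule gauss_duplication[OF two \<alpha>])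
  have B: "?B = gauss \<psi> (cmul (cmul \<alpha> \<mu>) (cmul \<alpha> \<mu>)) * gauss \<psi> quad_char / (\<alpha> 4 * \<mu> 4)"
    using gauss_duplication[OF two cmul_mchars[OF \<alpha> \<mu>]] by (simp add: cmul_def)
  have "?A \<noteq> 0"
    using gauss_nonzero[OF \<alpha>] gauss_nonzero[OF cmul_mchars[OF \<alpha> quad_char_mchars[OF two]]] by simp
  have "cmul (cmul \<alpha> quad_char) \<mu> = cmul (cmul \<alpha> \<mu>) quad_char"
    by (rule ext) (simp add: cmul_def mult_ac)
  then have "gauss \<psi> (cmul \<alpha> \<alpha>) * (poch \<psi> \<alpha> \<mu> * poch \<psi> (cmul \<alpha> quad_char) \<mu>)
      = gauss \<psi> (cmul \<alpha> \<alpha>) * ?B / ?A"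
    by (simp add: poch_def)
  also have "gauss \<psi> (cmul \<alpha> \<alpha>) * ?B = gauss \<psi> (cmul (cmul \<alpha> \<mu>) (cmul \<alpha> \<mu>)) / \<mu> 4 * ?A"
    unfolding A B by (simp add: mult_ac)
  also have "gauss \<psi> (cmul (cmul \<alpha> \<mu>) (cmul \<alpha> \<mu>)) / \<mu> 4 * ?A / ?A
      = gauss \<psi> (cmul (cmul \<alpha> \<mu>) (cmul \<alpha> \<mu>)) / \<mu> 4"
    by (rule nonzero_mult_div_cancel_right[OF \<open>?A \<noteq> 0\<close>])
  finally show ?thesis .
qed

end

section \<open>Mellin expansion of products of hypergeometric functions\<close>

lemma prod_hyp_scaled:
  fixes \<psi> :: "'a::{field,finite} \<Rightarrow> complex"
  shows "(\<Prod>i\<in>{1..n}. hyp \<psi> (As i) (Bs i) (lam i * x))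
    = (1 / (1 - of_nat CARD('a))) ^ n * (\<Sum>\<nu>\<in>PiE {1..n} (\<lambda>_. mchars).
        (\<Prod>i\<in>{1..n}. \<Prod>a\<leftarrow>As i. poch \<psi> a (\<nu> i)) / (\<Prod>i\<in>{1..n}. \<Prod>b\<leftarrow>Bs i. poch0 \<psi> b (\<nu> i))
        * lauP \<psi> n \<nu> lam * cprod n \<nu> x)"
proof -
  let ?c = "1 / (1 - of_nat CARD('a)) :: complex"
  define A where "A i \<mu> = (\<Prod>a\<leftarrow>As i. poch \<psi> a \<mu>)" for i \<mu>
  define B where "B i \<mu> = (\<Prod>b\<leftarrow>Bs i. poch0 \<psi> b \<mu>)" for i \<mu>
  have "(\<Prod>i\<in>{1..n}. hyp \<psi> (As i) (Bs i) (lam i * x))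
      = (\<Prod>i\<in>{1..n}. ?c * (\<Sum>\<mu>\<in>mchars. A i \<mu> / (poch0 \<psi> \<epsilon> \<mu> * B i \<mu>) * \<mu> (lam i * x)))"
    by (simp only: hyp_def A_def B_def)
  also have "\<dots> = ?c ^ n * (\<Sum>\<nu>\<in>PiE {1..n} (\<lambda>_. mchars).
      \<Prod>i\<in>{1..n}. A i (\<nu> i) / (poch0 \<psi> \<epsilon> (\<nu> i) * B i (\<nu> i)) * \<nu> i (lam i * x))"
    by (simp only: prod.distrib prod_constant card_atLeastAtMost diff_Suc_1 prod_sum_PiE
        finite_atLeastAtMost finite_mchars)
  also have "\<dots> = ?c ^ n * (\<Sum>\<nu>\<in>PiE {1..n} (\<lambda>_. mchars).
      (\<Prod>i\<in>{1..n}. A i (\<nu> i)) / (\<Prod>i\<in>{1..n}. B i (\<nu> i)) * lauP \<psi> n \<nu> lam * cprod n \<nu> x)"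
  proof (rule arg_cong[where f="\<lambda>s. ?c ^ n * s"], rule sum.cong[OF refl])
    fix \<nu> :: "nat \<Rightarrow> 'a \<Rightarrow> complex"
    assume \<nu>: "\<nu> \<in> PiE {1..n} (\<lambda>_. mchars)"
    have "(\<Prod>i\<in>{1..n}. A i (\<nu> i) / (poch0 \<psi> \<epsilon> (\<nu> i) * B i (\<nu> i)) * \<nu> i (lam i * x))
        = (\<Prod>i\<in>{1..n}. A i (\<nu> i) / B i (\<nu> i) * (\<nu> i (lam i) / poch0 \<psi> \<epsilon> (\<nu> i)) * \<nu> i x)"
    proof (rule prod.cong[OF refl])
      fix i assume "i \<in> {1..n}"
      then have "\<nu> i \<in> mchars"
        using \<nu> by auto
      then show "A i (\<nu> i) / (poch0 \<psi> \<epsilon> (\<nu> i) * B i (\<nu> i)) * \<nu> i (lam i * x)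
          = A i (\<nu> i) / B i (\<nu> i) * (\<nu> i (lam i) / poch0 \<psi> \<epsilon> (\<nu> i)) * \<nu> i x"
        by (simp add: mchars_mult mult_ac)
    qed
    then show "(\<Prod>i\<in>{1..n}. A i (\<nu> i) / (poch0 \<psi> \<epsilon> (\<nu> i) * B i (\<nu> i)) * \<nu> i (lam i * x))
        = (\<Prod>i\<in>{1..n}. A i (\<nu> i)) / (\<Prod>i\<in>{1..n}. B i (\<nu> i)) * lauP \<psi> n \<nu> lam * cprod n \<nu> x"
      by (simp only: prod.distrib prod_dividef lauP_def cprod_def)
  qed
  finally show ?thesis
    by (simp only: A_def B_def)
qed

lemma sum_prod_hyp_scaled:
  fixes \<psi> :: "'a::{field,finite} \<Rightarrow> complex"
  shows "(\<Sum>t\<in>S. w t * (\<Prod>i\<in>{1..n}. hyp \<psi> (As i) (Bs i) (lam i * x t)))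
    = (1 / (1 - of_nat CARD('a))) ^ n * (\<Sum>\<nu>\<in>PiE {1..n} (\<lambda>_. mchars).
        (\<Prod>i\<in>{1..n}. \<Prod>a\<leftarrow>As i. poch \<psi> a (\<nu> i)) / (\<Prod>i\<in>{1..n}. \<Prod>b\<leftarrow>Bs i. poch0 \<psi> b (\<nu> i))
        * lauP \<psi> n \<nu> lam * (\<Sum>t\<in>S. w t * cprod n \<nu> (x t)))"
  unfolding prod_hyp_scaled sum_distrib_left by (subst sum.swap) (simp only: mult_ac)

context nontrivial_add_char
begin

lemma lauricella_A_eq_sum_1F1:
  assumes \<alpha>: "\<alpha> \<in> mchars"
  shows "- gauss \<psi> \<alpha> * lauricella_A \<psi> n \<alpha> \<beta>s \<gamma>s lam
    = (\<Sum>t\<in>UNIV - {0}. \<psi> t * \<alpha> t * (\<Prod>i\<in>{1..n}. hyp \<psi> [\<beta>s i] [\<gamma>s i] (lam i * t)))"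
proof -
  let ?c = "1 / (1 - of_nat CARD('a)) :: complex"
  have gauss_sum: "(\<Sum>t\<in>UNIV - {0}. \<psi> t * \<alpha> t * cprod n \<nu> t) = - gauss \<psi> \<alpha> * poch \<psi> \<alpha> (cprod n \<nu>)"
    for \<nu>
  proof -
    have "(\<Sum>t\<in>UNIV - {0}. \<psi> t * \<alpha> t * cprod n \<nu> t) = - gauss \<psi> (cmul \<alpha> (cprod n \<nu>))"
      by (simp add: gauss_def cmul_def mult.assoc)
    then show ?thesis
      by (simp only: gauss_mult_poch[OF \<alpha>, symmetric] mult_minus_left)
  qed
  have "(\<Sum>t\<in>UNIV - {0}. \<psi> t * \<alpha> t * (\<Prod>i\<in>{1..n}. hyp \<psi> [\<beta>s i] [\<gamma>s i] (lam i * t)))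
      = ?c ^ n * (\<Sum>\<nu>\<in>PiE {1..n} (\<lambda>_. mchars).
          (\<Prod>i\<in>{1..n}. poch \<psi> (\<beta>s i) (\<nu> i)) / (\<Prod>i\<in>{1..n}. poch0 \<psi> (\<gamma>s i) (\<nu> i)) * lauP \<psi> n \<nu> lam
          * (\<Sum>t\<in>UNIV - {0}. \<psi> t * \<alpha> t * cprod n \<nu> t))"
    using sum_prod_hyp_scaled[where x="\<lambda>t. t" and As="\<lambda>i. [\<beta>s i]" and Bs="\<lambda>i. [\<gamma>s i]"] by simp
  also have "\<dots> = - gauss \<psi> \<alpha> * lauricella_A \<psi> n \<alpha> \<beta>s \<gamma>s lam"
    unfolding gauss_sum lauricella_A_def power_one_over sum_distrib_left by (simp add: mult_ac)
  finally show ?thesis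
    by (rule sym)
qed

lemma lauricella_B_eq_sum_2F0:
  assumes "n \<ge> 1" and \<gamma>: "\<gamma> \<in> mchars"
  shows "- (of_nat CARD('a) / gauss0 \<psi> \<gamma>) * lauricella_B \<psi> n \<alpha>s \<beta>s \<gamma> lam
    = (\<Sum>t\<in>UNIV - {0}. \<psi> (- t) * cconj \<gamma> t * (\<Prod>i\<in>{1..n}. hyp \<psi> [\<alpha>s i, \<beta>s i] [] (lam i / t)))"
proof -
  let ?c = "1 / (1 - of_nat CARD('a)) :: complex"
  have gauss_sum: "(\<Sum>t\<in>UNIV - {0}. \<psi> (- t) * cconj \<gamma> t * cprod n \<nu> (inverse t))
      = - (of_nat CARD('a) / gauss0 \<psi> \<gamma>) / poch0 \<psi> \<gamma> (cprod n \<nu>)"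
    if \<nu>: "\<nu> \<in> PiE {1..n} (\<lambda>_. mchars)" for \<nu>
  proof -
    have \<mu>: "cprod n \<nu> \<in> mchars"
      using cprod_mchars[OF assms(1) \<nu>] .
    have "(\<Sum>t\<in>UNIV - {0}. \<psi> (- t) * cconj \<gamma> t * cprod n \<nu> (inverse t))
        = (\<Sum>t\<in>UNIV - {0}. \<psi> (- t) * cconj (cmul \<gamma> (cprod n \<nu>)) t)"
      by (simp add: mchars_inverse[OF \<mu>] cconj_def cmul_def mult.assoc)
    also have "\<dots> = - (of_nat CARD('a) / (gauss0 \<psi> \<gamma> * poch0 \<psi> \<gamma> (cprod n \<nu>)))"
      by (simp only: sum_psi_neg_cconj[OF cmul_mchars[OF \<gamma> \<mu>]] gauss0_mult_poch0[OF \<gamma>, symmetric])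
    finally show ?thesis
      by simp
  qed
  have "(\<Sum>t\<in>UNIV - {0}. \<psi> (- t) * cconj \<gamma> t * (\<Prod>i\<in>{1..n}. hyp \<psi> [\<alpha>s i, \<beta>s i] [] (lam i / t)))
      = ?c ^ n * (\<Sum>\<nu>\<in>PiE {1..n} (\<lambda>_. mchars).
          (\<Prod>i\<in>{1..n}. poch \<psi> (\<alpha>s i) (\<nu> i) * poch \<psi> (\<beta>s i) (\<nu> i)) * lauP \<psi> n \<nu> lam
          * (\<Sum>t\<in>UNIV - {0}. \<psi> (- t) * cconj \<gamma> t * cprod n \<nu> (inverse t)))"
    using sum_prod_hyp_scaled[where x=inverse and As="\<lambda>i. [\<alpha>s i, \<beta>s i]" and Bs="\<lambda>i. []"]
    by (simp add: divide_inverse)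
  also have "\<dots> = ?c ^ n * (\<Sum>\<nu>\<in>PiE {1..n} (\<lambda>_. mchars).
          (\<Prod>i\<in>{1..n}. poch \<psi> (\<alpha>s i) (\<nu> i) * poch \<psi> (\<beta>s i) (\<nu> i)) * lauP \<psi> n \<nu> lam
          * (- (of_nat CARD('a) / gauss0 \<psi> \<gamma>) / poch0 \<psi> \<gamma> (cprod n \<nu>)))"
    by (rule arg_cong[where f="\<lambda>s. ?c ^ n * s"], rule sum.cong[OF refl]) (simp only: gauss_sum)
  also have "\<dots> = - (of_nat CARD('a) / gauss0 \<psi> \<gamma>) * lauricella_B \<psi> n \<alpha>s \<beta>s \<gamma> lam"
    unfolding lauricella_B_def power_one_over sum_distrib_left by (simp add: mult_ac)
  finally show ?thesis
    by (rule sym)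
qed

lemma lauricella_C_eq_sum_0F1_square:
  assumes two: "(2::'a) \<noteq> 0" and "n \<ge> 1" and \<alpha>: "\<alpha> \<in> mchars"
  shows "- gauss \<psi> (cmul \<alpha> \<alpha>) * lauricella_C \<psi> n \<alpha> (cmul \<alpha> quad_char) \<beta>s lam
    = (\<Sum>t\<in>UNIV - {0}. \<psi> t * cmul \<alpha> \<alpha> t * (\<Prod>i\<in>{1..n}. hyp \<psi> [] [\<beta>s i] (lam i * t ^ 2 / 4)))"
proof -
  let ?c = "1 / (1 - of_nat CARD('a)) :: complex"
  have gauss_sum: "(\<Sum>t\<in>UNIV - {0}. \<psi> t * cmul \<alpha> \<alpha> t * cprod n \<nu> (t ^ 2 / 4))
      = - gauss \<psi> (cmul \<alpha> \<alpha>) * (poch \<psi> \<alpha> (cprod n \<nu>) * poch \<psi> (cmul \<alpha> quad_char) (cprod n \<nu>))"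
    if \<nu>: "\<nu> \<in> PiE {1..n} (\<lambda>_. mchars)" for \<nu>
  proof -
    have \<mu>: "cprod n \<nu> \<in> mchars"
      using cprod_mchars[OF assms(2) \<nu>] .
    have "(\<Sum>t\<in>UNIV - {0}. \<psi> t * cmul \<alpha> \<alpha> t * cprod n \<nu> (t ^ 2 / 4))
        = (\<Sum>t\<in>UNIV - {0}. \<psi> t * cmul (cmul \<alpha> (cprod n \<nu>)) (cmul \<alpha> (cprod n \<nu>)) t) / cprod n \<nu> 4"
      by (simp add: mchars_divide[OF \<mu>] mchars_mult[OF \<mu>] mchars_power[OF \<mu>]
          cmul_def power2_eq_square sum_divide_distrib mult_ac)
    also have "\<dots> = - (gauss \<psi> (cmul (cmul \<alpha> (cprod n \<nu>)) (cmul \<alpha> (cprod n \<nu>))) / cprod n \<nu> 4)"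
      by (simp add: gauss_def)
    finally show ?thesis
      by (simp only: poch_duplication[OF two \<alpha> \<mu>, symmetric] mult_minus_left)
  qed
  have "(\<Sum>t\<in>UNIV - {0}. \<psi> t * cmul \<alpha> \<alpha> t * (\<Prod>i\<in>{1..n}. hyp \<psi> [] [\<beta>s i] (lam i * t ^ 2 / 4)))
      = ?c ^ n * (\<Sum>\<nu>\<in>PiE {1..n} (\<lambda>_. mchars).
          1 / (\<Prod>i\<in>{1..n}. poch0 \<psi> (\<beta>s i) (\<nu> i)) * lauP \<psi> n \<nu> lam
          * (\<Sum>t\<in>UNIV - {0}. \<psi> t * cmul \<alpha> \<alpha> t * cprod n \<nu> (t ^ 2 / 4)))"
    using sum_prod_hyp_scaled[where x="\<lambda>t. t ^ 2 / 4" and As="\<lambda>i. []" and Bs="\<lambda>i. [\<beta>s i]"]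
    by simp
  also have "\<dots> = ?c ^ n * (\<Sum>\<nu>\<in>PiE {1..n} (\<lambda>_. mchars).
          1 / (\<Prod>i\<in>{1..n}. poch0 \<psi> (\<beta>s i) (\<nu> i)) * lauP \<psi> n \<nu> lam
          * (- gauss \<psi> (cmul \<alpha> \<alpha>) * (poch \<psi> \<alpha> (cprod n \<nu>) * poch \<psi> (cmul \<alpha> quad_char) (cprod n \<nu>))))"
    by (rule arg_cong[where f="\<lambda>s. ?c ^ n * s"], rule sum.cong[OF refl]) (simp only: gauss_sum)
  also have "\<dots> = - gauss \<psi> (cmul \<alpha> \<alpha>) * lauricella_C \<psi> n \<alpha> (cmul \<alpha> quad_char) \<beta>s lam"
    unfolding lauricella_C_def power_one_over sum_distrib_left by (simp add: mult_ac)
  finally show ?thesis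
    by (rule sym)
qed

lemma lauricella_C_eq_double_sum_0F1:
  assumes "n \<ge> 1" and \<alpha>: "\<alpha> \<in> mchars" and \<beta>: "\<beta> \<in> mchars"
  shows "gauss \<psi> \<alpha> * gauss \<psi> \<beta> * lauricella_C \<psi> n \<alpha> \<beta> \<gamma>s lam
    = (\<Sum>s\<in>UNIV - {0}. \<Sum>t\<in>UNIV - {0}. \<psi> (s + t) * \<alpha> s * \<beta> t *
        (\<Prod>i\<in>{1..n}. hyp \<psi> [] [\<gamma>s i] (lam i * s * t)))"
proof -
  let ?c = "1 / (1 - of_nat CARD('a)) :: complex"
  let ?U = "UNIV - {0::'a}"
  define w where "w p = \<psi> (fst p + snd p) * \<alpha> (fst p) * \<beta> (snd p)" for p
  have gauss_sum: "(\<Sum>p\<in>?U \<times> ?U. w p * cprod n \<nu> (fst p * snd p))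
      = gauss \<psi> \<alpha> * poch \<psi> \<alpha> (cprod n \<nu>) * (gauss \<psi> \<beta> * poch \<psi> \<beta> (cprod n \<nu>))"
    if \<nu>: "\<nu> \<in> PiE {1..n} (\<lambda>_. mchars)" for \<nu>
  proof -
    have \<mu>: "cprod n \<nu> \<in> mchars"
      using cprod_mchars[OF assms(1) \<nu>] .
    have "(\<Sum>p\<in>?U \<times> ?U. w p * cprod n \<nu> (fst p * snd p))
        = (\<Sum>s\<in>?U. \<psi> s * cmul \<alpha> (cprod n \<nu>) s) * (\<Sum>t\<in>?U. \<psi> t * cmul \<beta> (cprod n \<nu>) t)"
      unfolding sum_product sum.cartesian_product'
      by (intro sum.cong refl) (simp add: w_def psi_add mchars_mult[OF \<mu>] cmul_def mult_ac)
    also have "\<dots> = gauss \<psi> (cmul \<alpha> (cprod n \<nu>)) * gauss \<psi> (cmul \<beta> (cprod n \<nu>))"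
      by (simp add: gauss_def)
    finally show ?thesis
      by (simp only: gauss_mult_poch[OF \<alpha>, symmetric] gauss_mult_poch[OF \<beta>, symmetric])
  qed
  have "(\<Sum>s\<in>?U. \<Sum>t\<in>?U. \<psi> (s + t) * \<alpha> s * \<beta> t * (\<Prod>i\<in>{1..n}. hyp \<psi> [] [\<gamma>s i] (lam i * s * t)))
      = (\<Sum>p\<in>?U \<times> ?U. w p * (\<Prod>i\<in>{1..n}. hyp \<psi> [] [\<gamma>s i] (lam i * (fst p * snd p))))"
    unfolding sum.cartesian_product' by (simp add: w_def mult.assoc)
  also have "\<dots> = ?c ^ n * (\<Sum>\<nu>\<in>PiE {1..n} (\<lambda>_. mchars).
          1 / (\<Prod>i\<in>{1..n}. poch0 \<psi> (\<gamma>s i) (\<nu> i)) * lauP \<psi> n \<nu> lam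
          * (\<Sum>p\<in>?U \<times> ?U. w p * cprod n \<nu> (fst p * snd p)))"
    using sum_prod_hyp_scaled[where x="\<lambda>p. fst p * snd p" and As="\<lambda>i. []" and Bs="\<lambda>i. [\<gamma>s i]"]
    by simp
  also have "\<dots> = ?c ^ n * (\<Sum>\<nu>\<in>PiE {1..n} (\<lambda>_. mchars).
          1 / (\<Prod>i\<in>{1..n}. poch0 \<psi> (\<gamma>s i) (\<nu> i)) * lauP \<psi> n \<nu> lam
          * (gauss \<psi> \<alpha> * poch \<psi> \<alpha> (cprod n \<nu>) * (gauss \<psi> \<beta> * poch \<psi> \<beta> (cprod n \<nu>))))"
    by (rule arg_cong[where f="\<lambda>s. ?c ^ n * s"], rule sum.cong[OF refl]) (simp only: gauss_sum)
  also have "\<dots> = gauss \<psi> \<alpha> * gauss \<psi> \<beta> * lauricella_C \<psi> n \<alpha> \<beta> \<gamma>s lam"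
    unfolding lauricella_C_def power_one_over sum_distrib_left by (simp add: mult_ac)
  finally show ?thesis
    by (rule sym)
qed

end

theorem theorem3p1:
  fixes \<psi> :: "'a::{field,finite} \<Rightarrow> complex"
    and n :: nat
    and \<alpha> \<beta> \<gamma> :: "'a \<Rightarrow> complex"
    and \<alpha>s \<beta>s \<gamma>s :: "nat \<Rightarrow> 'a \<Rightarrow> complex"
  assumes psi: "nontriv_add_char \<psi>"
    and n: "n \<ge> 1"
    and chars: "\<alpha> \<in> mchars" "\<beta> \<in> mchars" "\<gamma> \<in> mchars"
    and charsi: "\<forall>i\<in>{1..n}. \<alpha>s i \<in> mchars \<and> \<beta>s i \<in> mchars \<and> \<gamma>s i \<in> mchars"
  shows
   "(\<forall>lam :: nat \<Rightarrow> 'a.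
      - gauss \<psi> \<alpha> * lauricella_A \<psi> n \<alpha> \<beta>s \<gamma>s lam
      = (\<Sum>t\<in>UNIV - {0}. \<psi> t * \<alpha> t *
           (\<Prod>i\<in>{1..n}. hyp \<psi> [\<beta>s i] [\<gamma>s i] (lam i * t))))
  \<and> (\<forall>lam :: nat \<Rightarrow> 'a.
      - (of_nat (card (UNIV :: 'a set)) / gauss0 \<psi> \<gamma>) * lauricella_B \<psi> n \<alpha>s \<beta>s \<gamma> lam
      = (\<Sum>t\<in>UNIV - {0}. \<psi> (- t) * cconj \<gamma> t *
           (\<Prod>i\<in>{1..n}. hyp \<psi> [\<alpha>s i, \<beta>s i] [] (lam i / t))))
  \<and> (CHAR('a) \<noteq> 2 \<longrightarrow> (\<forall>lam :: nat \<Rightarrow> 'a.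
      - gauss \<psi> (cmul \<alpha> \<alpha>) * lauricella_C \<psi> n \<alpha> (cmul \<alpha> quad_char) \<beta>s lam
      = (\<Sum>t\<in>UNIV - {0}. \<psi> t * cmul \<alpha> \<alpha> t *
           (\<Prod>i\<in>{1..n}. hyp \<psi> [] [\<beta>s i] (lam i * t ^ 2 / 4)))))
  \<and> (\<forall>lam :: nat \<Rightarrow> 'a.
      gauss \<psi> \<alpha> * gauss \<psi> \<beta> * lauricella_C \<psi> n \<alpha> \<beta> \<gamma>s lam
      = (\<Sum>s\<in>UNIV - {0}. \<Sum>t\<in>UNIV - {0}. \<psi> (s + t) * \<alpha> s * \<beta> t *
           (\<Prod>i\<in>{1..n}. hyp \<psi> [] [\<gamma>s i] (lam i * s * t))))"
proof -
  interpret nontrivial_add_char \<psi>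
    by unfold_locales (rule psi)
  show ?thesis
    using lauricella_A_eq_sum_1F1[OF chars(1)] lauricella_B_eq_sum_2F0[OF n chars(3)]
      lauricella_C_eq_sum_0F1_square[OF two_nonzero_if_CHAR_neq_2 n chars(1)]
      lauricella_C_eq_double_sum_0F1[OF n chars(1,2)]
    by blast
qed

end
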